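(* There are only finitely many positive integers $n$ for which $\left\lfloor n^{30}/1116 \right\rfloor$ is prime. *)

theory Defs
  imports Complex_Main "HOL-Computational_Algebra.Primes"
begin

end

theory Submission
  imports Defs "HOL-Number_Theory.Number_Theory"
begin

(* Write n^30 = 1116 q + r with 1116 = 4 * 9 * 31. By Euler-Fermat, n^30 is 0 or 1 modulo 8, 31
   and (when 3 does not divide n) modulo 9, while 27 divides n^30 when 3 divides n. By the Chinese
   remainder theorem these residues determine q modulo 2 resp. 6, and q turns out to be even or a
   multiple of 3 unless r = 900 = 30^2. In that last case 1116 q = (n^15 - 30) (n^15 + 30), so a
   prime q divides one factor and the other is at most 1116, impossible for n >= 2. Since q = 0
   for n <= 1, q is never prime. *)

lemma cong_mult3_iff_nat:
  fixes x y a b c :: nat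
  assumes "coprime a b" "coprime a c" "coprime b c"
  shows "[x = y] (mod a * b * c) \<longleftrightarrow> [x = y] (mod a) \<and> [x = y] (mod b) \<and> [x = y] (mod c)"
proof -
  have "coprime (a * b) c"
    using assms by simp
  then show ?thesis
    using assms by (meson coprime_cong_mult_nat cong_modulus_mult_nat cong_dvd_modulus_nat dvd_triv_right)
qed

lemma div_mod_eq_if_cong_nat:
  fixes x y a b :: nat
  assumes "[x = y] (mod a * b)"
  shows "x div a mod b = y div a mod b"
proof (cases "a = 0")
  case False
  have "x mod a = y mod a"
    using cong_modulus_mult_nat[OF assms] by (simp add: cong_def)
  moreover have "a * (x div a mod b) + x mod a = a * (y div a mod b) + y mod a"
    using assms by (simp add: cong_def mod_mult2_eq)
  ultimately show ?thesis
    using False by simp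
qed simp

lemma pow30_mod_8:
  fixes n :: nat
  shows "n ^ 30 mod 8 = (if even n then 0 else 1)"
proof (cases "even n")
  case True
  then have "2 ^ 3 dvd n ^ 30"
    by (intro dvd_power_le) auto
  with True show ?thesis
    by simp
next
  case False
  then have "[n\<^sup>2 = 1] (mod 8)"
    by (rule square_mod_8_eq_1_iff[THEN iffD2])
  then have "[(n\<^sup>2) ^ 15 = 1 ^ 15] (mod 8)"
    by (rule cong_pow)
  with False show ?thesis
    by (simp add: cong_def flip: power_mult)
qed

lemma pow30_mod_27:
  fixes n :: nat
  assumes "3 dvd n"
  shows "n ^ 30 mod 27 = 0"
proof -
  have "3 ^ 3 dvd n ^ 30"
    using assms by (intro dvd_power_le) auto
  then show ?thesis
    by simp
qed

lemma pow30_mod_9: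
  fixes n :: nat
  assumes "\<not> 3 dvd n"
  shows "n ^ 30 mod 9 = 1"
proof -
  have "coprime 3 n"
    using assms by (intro prime_imp_coprime) simp_all
  then have "coprime n (3 ^ 2)"
    by (metis coprime_commute coprime_power_right_iff)
  moreover have "totient (3 ^ 2) = 6"
    using totient_prime_power[of 3 2] by simp
  ultimately have "[n ^ 6 = 1] (mod 9)"
    using euler_theorem[of n "3 ^ 2"] by simp
  then have "[(n ^ 6) ^ 5 = 1 ^ 5] (mod 9)"
    by (rule cong_pow)
  then show ?thesis
    by (simp add: cong_def flip: power_mult)
qed

lemma pow30_mod_31:
  fixes n :: nat
  shows "n ^ 30 mod 31 = (if 31 dvd n then 0 else 1)"
proof (cases "31 dvd n")
  case True
  then have "31 ^ 1 dvd n ^ 30"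
    by (intro dvd_power_le) auto
  with True show ?thesis
    by simp
next
  case False
  have "prime (31 :: nat)"
    by (simp add: prime_nat_iff' set_upt[symmetric])
  from fermat_theorem[OF this False] have "[n ^ 30 = 1] (mod 31)"
    by simp
  with False show ?thesis
    by (simp add: cong_def)
qed

lemma div_1116_cases:
  fixes x :: nat
  assumes mod_8: "x mod 8 = 0 \<or> x mod 8 = 1"
    and mod_27: "x mod 27 = 0 \<or> x mod 9 = 1"
    and mod_31: "x mod 31 = 0 \<or> x mod 31 = 1"
  shows "even (x div 1116) \<or> 3 dvd (x div 1116) \<or> x mod 1116 = 900"
proof -
  have crt_2232: "[x = c] (mod 2232) \<longleftrightarrow> x mod 8 = c mod 8 \<and> x mod 9 = c mod 9 \<and> x mod 31 = c mod 31"
    for c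
    using cong_mult3_iff_nat[of 8 9 31 x c] by (simp add: cong_def coprime_iff_gcd_eq_1 gcd_non_0_nat)
  have crt_6696: "[x = c] (mod 6696) \<longleftrightarrow> x mod 8 = c mod 8 \<and> x mod 27 = c mod 27 \<and> x mod 31 = c mod 31"
    for c
    using cong_mult3_iff_nat[of 8 27 31 x c] by (simp add: cong_def coprime_iff_gcd_eq_1 gcd_non_0_nat)
  (* The sets below list the solutions of the residue conditions modulo 8 * 9 * 31 = 2 * 1116
     resp. 8 * 27 * 31 = 6 * 1116. *)
  from mod_27 consider (coprime_3) "x mod 9 = 1" | (dvd_27) "x mod 27 = 0"
    by auto
  then show ?thesis
  proof cases
    case coprime_3
    have "\<exists>c\<in>{1, 217, 280, 496}. [x = c] (mod 2232)"
      using mod_8 mod_31 coprime_3 by (elim disjE) (simp_all add: crt_2232)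
    then obtain c where c: "c \<in> {1, 217, 280, 496}" "[x = c] (mod 1116 * 2)"
      by auto
    have "x div 1116 mod 2 = c div 1116 mod 2"
      by (rule div_mod_eq_if_cong_nat[OF c(2)])
    with c(1) show ?thesis
      by auto
  next
    case dvd_27
    have "\<exists>c\<in>{0, 3969, 4185, 6480}. [x = c] (mod 6696)"
      using mod_8 mod_31 dvd_27 by (elim disjE) (simp_all add: crt_6696)
    then obtain c where c: "c \<in> {0, 3969, 4185, 6480}" "[x = c] (mod 1116 * 6)"
      by auto
    have "x div 1116 mod 6 = c div 1116 mod 6"
      by (rule div_mod_eq_if_cong_nat[OF c(2)])
    moreover have "x mod 1116 = c mod 1116"
      using cong_modulus_mult_nat[OF c(2)] by (simp add: cong_def)
    ultimately have residues: "x div 1116 mod 6 = 0 \<or> x div 1116 mod 6 = 3 \<or> x mod 1116 = 900"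
      using c(1) by auto
    have "3 dvd q" if "q mod 6 = 0 \<or> q mod 6 = 3" for q :: nat
      using that by presburger
    from this[of "x div 1116"] residues show ?thesis
      by blast
  qed
qed

lemma pow30_div_1116_cases:
  fixes n :: nat
  shows "even (n ^ 30 div 1116) \<or> 3 dvd (n ^ 30 div 1116) \<or> n ^ 30 mod 1116 = 900"
proof (rule div_1116_cases)
  show "n ^ 30 mod 8 = 0 \<or> n ^ 30 mod 8 = 1"
    by (simp add: pow30_mod_8)
  show "n ^ 30 mod 27 = 0 \<or> n ^ 30 mod 9 = 1"
    using pow30_mod_27 pow30_mod_9 by blast
  show "n ^ 30 mod 31 = 0 \<or> n ^ 30 mod 31 = 1"
    by (simp add: pow30_mod_31)
qed

lemma diff_le_if_square_eq_prime_mult_plus_square: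
  fixes m s a p :: nat
  assumes "prime p" and square_eq: "m\<^sup>2 = a * p + s\<^sup>2"
  shows "m - s \<le> a"
proof (cases "s < m")
  case True
  then obtain d where m: "m = s + d"
    using less_imp_add_positive by blast
  have factored: "(m - s) * (m + s) = a * p"
    using square_eq unfolding m by (simp add: power2_eq_square algebra_simps)
  have cofactor_bound: "v \<le> a" if "p dvd u" "u * v = a * p" "u > 0" for u v
  proof -
    from \<open>p dvd u\<close> obtain c where u: "u = p * c" ..
    with \<open>u > 0\<close> have "c \<ge> 1"
      by simp
    from \<open>u * v = a * p\<close> have "c * v = a"
      using \<open>prime p\<close> unfolding u by (simp add: prime_gt_0_nat)
    with \<open>c \<ge> 1\<close> show "v \<le> a"
      by (metis mult_le_mono1 mult_1)
  qed
  from factored have "p dvd (m - s) \<or> p dvd (m + s)"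
    using \<open>prime p\<close> prime_dvd_mult_iff by (metis dvd_triv_right)
  then show ?thesis
  proof
    assume "p dvd (m - s)"
    from cofactor_bound[OF this factored] True have "m + s \<le> a"
      by simp
    then show ?thesis
      by simp
  next
    assume "p dvd (m + s)"
    from cofactor_bound[OF this] factored True show ?thesis
      by (simp add: mult.commute)
  qed
qed simp

lemma not_prime_pow30_div_1116:
  fixes n :: nat
  shows "\<not> prime (n ^ 30 div 1116)"
proof
  define q where "q = n ^ 30 div 1116"
  assume "prime (n ^ 30 div 1116)"
  then have "prime q"
    by (simp add: q_def)
  have "n \<ge> 2"
  proof (rule ccontr)
    assume "\<not> n \<ge> 2"
    then have "n = 0 \<or> n = 1"
      by auto
    then have "q = 0"
      by (auto simp: q_def)
    with \<open>prime q\<close> show False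
      by simp
  qed
  then have "2 ^ 30 div 1116 \<le> q"
    unfolding q_def by (intro div_le_mono power_mono) simp_all
  then have "q \<noteq> 2" "q \<noteq> 3"
    by simp_all
  with \<open>prime q\<close> have "\<not> even q" "\<not> 3 dvd q"
    using primes_dvd_imp_eq[of 2 q] primes_dvd_imp_eq[of 3 q] by auto
  moreover have "even q \<or> 3 dvd q \<or> n ^ 30 mod 1116 = 900"
    unfolding q_def by (rule pow30_div_1116_cases)
  ultimately have "n ^ 30 mod 1116 = 900"
    by blast
  then have "(n ^ 15)\<^sup>2 = 1116 * q + 30\<^sup>2"
    using mult_div_mod_eq[of 1116 "n ^ 30"] by (simp add: q_def flip: power_mult)
  then have "n ^ 15 - 30 \<le> 1116"
    using \<open>prime q\<close> by (intro diff_le_if_square_eq_prime_mult_plus_square) (simp_all add: mult.commute)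
  moreover have "2 ^ 15 \<le> n ^ 15"
    using \<open>n \<ge> 2\<close> by (rule power_mono) simp
  ultimately show False
    by simp
qed

theorem theorem8:
  shows "finite {n::nat. n > 0 \<and> prime (\<lfloor>real n ^ 30 / 1116\<rfloor>)}"
proof -
  have floor_eq: "\<lfloor>real n ^ 30 / 1116\<rfloor> = int (n ^ 30 div 1116)" for n :: nat
    using floor_divide_of_nat_eq[of "n ^ 30" 1116] by simp
  have "{n::nat. n > 0 \<and> prime (\<lfloor>real n ^ 30 / 1116\<rfloor>)} = {}"
    using not_prime_pow30_div_1116 by (simp add: floor_eq)
  then show ?thesis
    by (simp only: finite.emptyI)
qed

end
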